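(* Let $(\mathcal{S},\mathcal{R})$ be a complete positive presentation satisfying the following two conditions: (C) $\mathcal{R}$ contains no relation of the form $su=sv$ or $us=vs$ with $s\in\mathcal{S}$, $u,v\in\mathcal{S}^*$ and $u\neq v$; (E$_r$) there exists a set $\mathcal{S}'$ with $\mathcal{S}\subseteq\mathcal{S}'\subseteq\mathcal{S}^*$ such that for all $u,v\in\mathcal{S}'$ there exist $u',v'\in\mathcal{S}'$ satisfying $(uv')^{-1}(vu')\curvearrowright_r\varepsilon$. Then the monoid $\mathrm{Mon}(\mathcal{S};\mathcal{R})$ embeds in a group of fractions.
   Context: A positive presentation is a pair $(\mathcal{S},\mathcal{R})$ where $\mathcal{S}$ is a nonempty set of letters and $\mathcal{R}$ is a family of relations $u=v$, i.e. unordered pairs $\{u,v\}$ of nonempty words in the free monoid $\mathcal{S}^*$ (letters are regarded as length-one words). $\varepsilon$ denotes the empty word; $\equiv$ is the smallest congruence on $\mathcal{S}^*$ containing all pairs of $\mathcal{R}$, and $\mathrm{Mon}(\mathcal{S};\mathcal{R})=\mathcal{S}^*/{\equiv}$. Let $\mathcal{S}^{-1}=\{s^{-1}:s\in\mathcal{S}\}$ be a disjoint copy of $\mathcal{S}$; for $u\in\mathcal{S}^*$, $u^{-1}$ is obtained by reversing the order of the letters of $u$ and replacing each $s$ by $s^{-1}$. Right reversing: $\mathbf{w}\curvearrowright_r\mathbf{w}'$ (words on $\mathcal{S}\cup\mathcal{S}^{-1}$) if $\mathbf{w}'$ is obtained from $\mathbf{w}$ by finitely many steps, each deleting a subword $u^{-1}u$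 ($u\in\mathcal{S}^*$ nonempty) or replacing a subword $u^{-1}v$ ($u,v\in\mathcal{S}^*$ nonempty) by $v'u'^{-1}$ where $uv'=vu'$ is a relation of $\mathcal{R}$. Left reversing: $\mathbf{w}\curvearrowright_l\mathbf{w}'$ if $\mathbf{w}'$ is obtained by finitely many steps, each deleting a subword $uu^{-1}$ ($u$ nonempty) or replacing a subword $uv^{-1}$ ($u,v$ nonempty) by $v'^{-1}u'$ where $v'u=u'v$ is a relation of $\mathcal{R}$. $(\mathcal{S},\mathcal{R})$ is $r$-complete if for all $u,v,u',v'\in\mathcal{S}^*$ with $uv'\equiv vu'$ there exist $u'',v'',w\in\mathcal{S}^*$ with $u^{-1}v\curvearrowright_r v''u''^{-1}$, $u'\equiv u''w$, $v'\equiv v''w$; it is $l$-complete if for all $u,v,u',v'$ with $v'u\equiv u'v$ there exist $u'',v'',w$ with $uv^{-1}\curvearrowright_l v''^{-1}u''$, $u'\equiv wu''$, $v'\equiv wv''$; it is complete if it is both. A monoid $M$ embeds in a group of fractions if there is a group $G$ containing (an isomorphic copy of) $M$ as a submonoid such that every element of $G$ has the form $xy^{-1}$ with $x,y\in M$. *)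

theory Defs
  imports "HOL-Algebra.Group"
begin

text \<open>Signed letters: (s, True) stands for s,
(s, False) stands for s^{-1}. A family of relations R is a set of pairs (u,v);
a relation u = v is regarded as unordered, i.e. both (u,v) and (v,u) encode it.\<close>

definition pos :: "'a list \<Rightarrow> ('a \<times> bool) list" where
  "pos u = map (\<lambda>s. (s, True)) u"

definition winv :: "'a list \<Rightarrow> ('a \<times> bool) list" where
  "winv u = rev (map (\<lambda>s. (s, False)) u)"

definition is_rel :: "('a list \<times> 'a list) set \<Rightarrow> 'a list \<Rightarrow> 'a list \<Rightarrow> bool" where
  "is_rel R x y \<longleftrightarrow> (x, y) \<in> R \<or> (y, x) \<in> R"

definition positive_presentation :: "'a set \<Rightarrow> ('a list \<times> 'a list) set \<Rightarrow> bool" where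
  "positive_presentation S R \<longleftrightarrow> S \<noteq> {} \<and>
     (\<forall>(u, v) \<in> R. u \<in> lists S \<and> v \<in> lists S \<and> u \<noteq> [] \<and> v \<noteq> [])"

definition rstep :: "('a list \<times> 'a list) set \<Rightarrow> 'a list \<Rightarrow> 'a list \<Rightarrow> bool" where
  "rstep R x y \<longleftrightarrow> (\<exists>a b u v. is_rel R u v \<and> x = a @ u @ b \<and> y = a @ v @ b)"

definition pequiv :: "('a list \<times> 'a list) set \<Rightarrow> 'a list \<Rightarrow> 'a list \<Rightarrow> bool" where
  "pequiv R = (rstep R)\<^sup>*\<^sup>*"

definition rrev_step :: "'a set \<Rightarrow> ('a list \<times> 'a list) set \<Rightarrow>
    ('a \<times> bool) list \<Rightarrow> ('a \<times> bool) list \<Rightarrow> bool" where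
  "rrev_step S R w w' \<longleftrightarrow>
     (\<exists>w1 w2 u. u \<in> lists S \<and> u \<noteq> [] \<and> w = w1 @ winv u @ pos u @ w2 \<and> w' = w1 @ w2) \<or>
     (\<exists>w1 w2 u v u' v'. u \<in> lists S \<and> v \<in> lists S \<and> u' \<in> lists S \<and> v' \<in> lists S \<and>
        u \<noteq> [] \<and> v \<noteq> [] \<and> is_rel R (u @ v') (v @ u') \<and>
        w = w1 @ winv u @ pos v @ w2 \<and> w' = w1 @ pos v' @ winv u' @ w2)"

definition rrev :: "'a set \<Rightarrow> ('a list \<times> 'a list) set \<Rightarrow>
    ('a \<times> bool) list \<Rightarrow> ('a \<times> bool) list \<Rightarrow> bool" where
  "rrev S R = (rrev_step S R)\<^sup>*\<^sup>*"

definition lrev_step :: "'a set \<Rightarrow> ('a list \<times> 'a list) set \<Rightarrow>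
    ('a \<times> bool) list \<Rightarrow> ('a \<times> bool) list \<Rightarrow> bool" where
  "lrev_step S R w w' \<longleftrightarrow>
     (\<exists>w1 w2 u. u \<in> lists S \<and> u \<noteq> [] \<and> w = w1 @ pos u @ winv u @ w2 \<and> w' = w1 @ w2) \<or>
     (\<exists>w1 w2 u v u' v'. u \<in> lists S \<and> v \<in> lists S \<and> u' \<in> lists S \<and> v' \<in> lists S \<and>
        u \<noteq> [] \<and> v \<noteq> [] \<and> is_rel R (v' @ u) (u' @ v) \<and>
        w = w1 @ pos u @ winv v @ w2 \<and> w' = w1 @ winv v' @ pos u' @ w2)"

definition lrev :: "'a set \<Rightarrow> ('a list \<times> 'a list) set \<Rightarrow>
    ('a \<times> bool) list \<Rightarrow> ('a \<times> bool) list \<Rightarrow> bool" where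
  "lrev S R = (lrev_step S R)\<^sup>*\<^sup>*"

definition r_complete :: "'a set \<Rightarrow> ('a list \<times> 'a list) set \<Rightarrow> bool" where
  "r_complete S R \<longleftrightarrow>
    (\<forall>u \<in> lists S. \<forall>v \<in> lists S. \<forall>u' \<in> lists S. \<forall>v' \<in> lists S.
       pequiv R (u @ v') (v @ u') \<longrightarrow>
       (\<exists>u'' \<in> lists S. \<exists>v'' \<in> lists S. \<exists>w \<in> lists S.
          rrev S R (winv u @ pos v) (pos v'' @ winv u'') \<and>
          pequiv R u' (u'' @ w) \<and> pequiv R v' (v'' @ w)))"

definition l_complete :: "'a set \<Rightarrow> ('a list \<times> 'a list) set \<Rightarrow> bool" where
  "l_complete S R \<longleftrightarrow>
    (\<forall>u \<in> lists S. \<forall>v \<in> lists S. \<forall>u' \<in> lists S. \<forall>v' \<in> lists S.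
       pequiv R (v' @ u) (u' @ v) \<longrightarrow>
       (\<exists>u'' \<in> lists S. \<exists>v'' \<in> lists S. \<exists>w \<in> lists S.
          lrev S R (pos u @ winv v) (winv v'' @ pos u'') \<and>
          pequiv R u' (w @ u'') \<and> pequiv R v' (w @ v'')))"

definition complete :: "'a set \<Rightarrow> ('a list \<times> 'a list) set \<Rightarrow> bool" where
  "complete S R \<longleftrightarrow> r_complete S R \<and> l_complete S R"

definition condC :: "'a set \<Rightarrow> ('a list \<times> 'a list) set \<Rightarrow> bool" where
  "condC S R \<longleftrightarrow> (\<forall>x y. is_rel R x y \<longrightarrow>
     \<not> (\<exists>s u v. s \<in> S \<and> u \<in> lists S \<and> v \<in> lists S \<and> u \<noteq> v \<and>
          ((x = s # u \<and> y = s # v) \<or> (x = u @ [s] \<and> y = v @ [s]))))"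

definition condEr :: "'a set \<Rightarrow> ('a list \<times> 'a list) set \<Rightarrow> bool" where
  "condEr S R \<longleftrightarrow> (\<exists>S'. (\<lambda>s. [s]) ` S \<subseteq> S' \<and> S' \<subseteq> lists S \<and>
     (\<forall>u \<in> S'. \<forall>v \<in> S'. \<exists>u' \<in> S'. \<exists>v' \<in> S'.
        rrev S R (winv (u @ v') @ pos (v @ u')) []))"

text \<open>Mon(S;R) embeds in a group of fractions: there is a group G and a monoid
homomorphism from S^* to G whose kernel congruence is exactly \<equiv> (so it induces an
injective monoid homomorphism Mon(S;R) \<rightarrow> G), such that every element of G is
of the form x y^{-1} with x, y in the image. The carrier type of G is fixed to
('a list \<times> 'a list) set, which is large enough to hold a copy of any group of
fractions of Mon(S;R) (such a group is an image of S^* \<times> S^*).\<close>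
definition embeds_in_group_of_fractions :: "'a set \<Rightarrow> ('a list \<times> 'a list) set \<Rightarrow> bool" where
  "embeds_in_group_of_fractions S R \<longleftrightarrow>
    (\<exists>(G :: ('a list \<times> 'a list) set monoid) f. group G \<and>
       (\<forall>u \<in> lists S. f u \<in> carrier G) \<and>
       f [] = \<one>\<^bsub>G\<^esub> \<and>
       (\<forall>u \<in> lists S. \<forall>v \<in> lists S. f (u @ v) = f u \<otimes>\<^bsub>G\<^esub> f v) \<and>
       (\<forall>u \<in> lists S. \<forall>v \<in> lists S. f u = f v \<longleftrightarrow> pequiv R u v) \<and>
       (\<forall>g \<in> carrier G. \<exists>x \<in> lists S. \<exists>y \<in> lists S. g = f x \<otimes>\<^bsub>G\<^esub> inv\<^bsub>G\<^esub> (f y)))"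

end

theory Submission
  imports Defs "HOL-Algebra.Bij"
begin

text \<open>
  Under (C), right reversing can turn s^-1 s only into words of the form u u^-1, so completeness
  gives left cancellation: s u = s v implies u = v. Reversing all words exchanges left and right
  reversing, so right cancellation follows in the same way for the mirrored presentation.
  Right reversing is sound for equivalence, hence (E_r) provides common right multiples for the
  elements of S', and a grid argument extends them to arbitrary words. Ore's theorem then
  applies: a cancellative monoid with common right multiples embeds in its group of right
  fractions x y^-1, which is realised here as the group of permutations of the set of fractions
  generated by the left multiplications.
\<close>

lemma is_rel_sym: "is_rel R x y \<Longrightarrow> is_rel R y x"
  by (auto simp: is_rel_def)

lemma rstep_sym: "rstep R x y \<Longrightarrow> rstep R y x"
  unfolding rstep_def by (blast dest: is_rel_sym)

lemma rstep_append:
  assumes "rstep R x y"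
  shows "rstep R (c @ x @ d) (c @ y @ d)"
proof -
  from assms obtain a b u v where "is_rel R u v" "x = a @ u @ b" "y = a @ v @ b"
    unfolding rstep_def by blast
  then show ?thesis
    unfolding rstep_def by (intro exI[of _ "c @ a"] exI[of _ "b @ d"] exI[of _ u] exI[of _ v]) simp
qed

lemma pequiv_refl [simp]: "pequiv R x x"
  by (simp add: pequiv_def)

lemma pequiv_sym: "pequiv R x y \<Longrightarrow> pequiv R y x"
  unfolding pequiv_def
  by (induction rule: rtranclp_induct) (auto intro: converse_rtranclp_into_rtranclp rstep_sym)

lemma pequiv_trans [trans]: "pequiv R x y \<Longrightarrow> pequiv R y z \<Longrightarrow> pequiv R x z"
  unfolding pequiv_def by simp

lemma pequiv_append: "pequiv R x y \<Longrightarrow> pequiv R (c @ x @ d) (c @ y @ d)"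
  unfolding pequiv_def
  by (induction rule: rtranclp_induct) (auto intro: rtranclp.rtrancl_into_rtrancl rstep_append)

lemma pequiv_append_left: "pequiv R x y \<Longrightarrow> pequiv R (c @ x) (c @ y)"
  using pequiv_append[of R x y c "[]"] by simp

lemma pequiv_append_right: "pequiv R x y \<Longrightarrow> pequiv R (x @ d) (y @ d)"
  using pequiv_append[of R x y "[]" d] by simp

lemma pequiv_rel: "is_rel R x y \<Longrightarrow> pequiv R x y"
  unfolding pequiv_def rstep_def by (rule r_into_rtranclp) (metis append_Nil append_Nil2)

lemma pos_Nil [simp]: "pos [] = []"
  and pos_Cons [simp]: "pos (s # u) = (s, True) # pos u"
  and rev_pos: "rev (pos u) = pos (rev u)"
  by (simp_all add: pos_def rev_map)

lemma winv_Nil [simp]: "winv [] = []"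
  and winv_Cons: "winv (s # u) = winv u @ [(s, False)]"
  and winv_snoc: "winv (u @ [s]) = (s, False) # winv u"
  and rev_winv: "rev (winv u) = winv (rev u)"
  by (simp_all add: winv_def rev_map)

lemma pos_inj: "pos u = pos v \<Longrightarrow> u = v"
  unfolding pos_def by (rule list.inj_map_strong) auto

lemma winv_inj: "winv u = winv v \<Longrightarrow> u = v"
  unfolding winv_def rev_is_rev_conv by (rule list.inj_map_strong) auto

section \<open>The mirror presentation\<close>

lemma rev_in_lists_iff [simp]: "rev u \<in> lists S \<longleftrightarrow> u \<in> lists S"
  by (simp add: in_lists_conv_set)

definition rev_rels :: "('a list \<times> 'a list) set \<Rightarrow> ('a list \<times> 'a list) set" where
  "rev_rels R = (\<lambda>(x, y). (rev x, rev y)) ` R"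

lemma rev_rels_rev_rels [simp]: "rev_rels (rev_rels R) = R"
  by (force simp: rev_rels_def image_image)

lemma is_rel_rev_rels: "is_rel (rev_rels R) x y \<longleftrightarrow> is_rel R (rev x) (rev y)"
  by (force simp: is_rel_def rev_rels_def)

lemma rstep_rev: "rstep R x y \<Longrightarrow> rstep (rev_rels R) (rev x) (rev y)"
  unfolding rstep_def
  by (elim exE conjE) (intro exI[of _ "rev _"] conjI, simp_all add: is_rel_rev_rels)

lemma pequiv_rev: "pequiv R x y \<Longrightarrow> pequiv (rev_rels R) (rev x) (rev y)"
  unfolding pequiv_def
  by (induction rule: rtranclp_induct) (auto intro: rtranclp.rtrancl_into_rtrancl rstep_rev)

lemma pequiv_rev_rels_iff: "pequiv (rev_rels R) (rev x) (rev y) \<longleftrightarrow> pequiv R x y"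
  using pequiv_rev[of "rev_rels R" "rev x" "rev y"] pequiv_rev[of R x y] by auto

lemma lrev_step_imp_rrev_step:
  "lrev_step S R w w' \<Longrightarrow> rrev_step S (rev_rels R) (rev w) (rev w')"
  unfolding lrev_step_def
proof (elim disjE exE conjE)
  fix w1 w2 u assume "u \<in> lists S" "u \<noteq> []" "w = w1 @ pos u @ winv u @ w2" "w' = w1 @ w2"
  then have "rev u \<in> lists S" "rev u \<noteq> []" "rev w = rev w2 @ winv (rev u) @ pos (rev u) @ rev w1"
    "rev w' = rev w2 @ rev w1"
    by (simp_all add: rev_pos rev_winv)
  then show ?thesis
    unfolding rrev_step_def by blast
next
  fix w1 w2 u v u' v'
  assume "u \<in> lists S" "v \<in> lists S" "u' \<in> lists S" "v' \<in> lists S" "u \<noteq> []" "v \<noteq> []"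
    "is_rel R (v' @ u) (u' @ v)" "w = w1 @ pos u @ winv v @ w2" "w' = w1 @ winv v' @ pos u' @ w2"
  then have "rev v \<in> lists S" "rev u \<in> lists S" "rev v' \<in> lists S" "rev u' \<in> lists S"
    "rev v \<noteq> []" "rev u \<noteq> []" "is_rel (rev_rels R) (rev v @ rev u') (rev u @ rev v')"
    "rev w = rev w2 @ winv (rev v) @ pos (rev u) @ rev w1"
    "rev w' = rev w2 @ pos (rev u') @ winv (rev v') @ rev w1"
    by (simp_all add: rev_pos rev_winv is_rel_rev_rels is_rel_sym)
  then show ?thesis
    unfolding rrev_step_def by blast
qed

lemma lrev_imp_rrev: "lrev S R w w' \<Longrightarrow> rrev S (rev_rels R) (rev w) (rev w')"
  unfolding lrev_def rrev_def
  by (induction rule: rtranclp_induct)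
    (auto intro: rtranclp.rtrancl_into_rtrancl lrev_step_imp_rrev_step)

lemma condC_rev_rels:
  assumes "condC S R"
  shows "condC S (rev_rels R)"
  unfolding condC_def
proof (intro allI impI notI, elim exE conjE)
  fix x y s u v
  assume "is_rel (rev_rels R) x y" "s \<in> S" "u \<in> lists S" "v \<in> lists S" "u \<noteq> v"
    and shape: "x = s # u \<and> y = s # v \<or> x = u @ [s] \<and> y = v @ [s]"
  then have "is_rel R (rev x) (rev y)" "rev u \<in> lists S" "rev v \<in> lists S" "rev u \<noteq> rev v"
    by (auto simp: is_rel_rev_rels)
  moreover have "rev x = rev u @ [s] \<and> rev y = rev v @ [s] \<or> rev x = s # rev u \<and> rev y = s # rev v"
    using shape by auto
  ultimately show False
    using assms \<open>s \<in> S\<close> unfolding condC_def by blast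
qed

section \<open>Soundness of right reversing\<close>

text \<open>
  walk R w m n: reading w from m leads to n in the Cayley graph of Mon(S;R), where a positive
  letter s is a right multiplication by s and a negative letter its (partial) inverse.
\<close>

fun walk :: "('a list \<times> 'a list) set \<Rightarrow> ('a \<times> bool) list \<Rightarrow> 'a list \<Rightarrow> 'a list \<Rightarrow> bool" where
  "walk R [] m n = pequiv R m n"
| "walk R ((s, True) # w) m n = walk R w (m @ [s]) n"
| "walk R ((s, False) # w) m n = (\<exists>m'. pequiv R (m' @ [s]) m \<and> walk R w m' n)"

lemma walk_pequiv_start: "pequiv R m m' \<Longrightarrow> walk R w m n \<Longrightarrow> walk R w m' n"
proof (induction R w m n arbitrary: m' rule: walk.induct)
  case (1 R m n)
  then show ?case by (metis pequiv_sym pequiv_trans walk.simps(1))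
next
  case (2 R s w m n)
  then show ?case by (simp add: pequiv_append_right)
next
  case (3 R s w m n)
  then show ?case by (meson pequiv_trans walk.simps(3))
qed

lemma walk_append: "walk R (w1 @ w2) m n \<longleftrightarrow> (\<exists>k. walk R w1 m k \<and> walk R w2 k n)"
proof (induction R w1 m n rule: walk.induct)
  case (1 R m n)
  have "walk R w2 m n" if "pequiv R m k" "walk R w2 k n" for k
    using that by (blast intro: walk_pequiv_start pequiv_sym)
  then show ?case by (simp only: append_Nil walk.simps(1)) (blast intro: pequiv_refl)
qed auto

lemma walk_pos: "walk R (pos u) m n \<longleftrightarrow> pequiv R (m @ u) n"
  by (induction u arbitrary: m) auto

lemma walk_winv: "walk R (winv u) m n \<longleftrightarrow> pequiv R (n @ u) m"
proof (induction u arbitrary: m rule: rev_induct)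
  case Nil
  then show ?case by (auto intro: pequiv_sym)
next
  case (snoc s u)
  then show ?case
    by (simp add: winv_snoc) (metis append_assoc pequiv_append_right pequiv_refl pequiv_trans)
qed

lemma rrev_step_walk: "rrev_step S R w w' \<Longrightarrow> walk R w m n \<Longrightarrow> walk R w' m n"
  unfolding rrev_step_def
proof (elim disjE exE conjE)
  fix w1 w2 u assume "w = w1 @ winv u @ pos u @ w2" "w' = w1 @ w2" "walk R w m n"
  then obtain k1 k2 k3 where "walk R w1 m k1" "pequiv R (k2 @ u) k1" "pequiv R (k2 @ u) k3"
    "walk R w2 k3 n"
    by (auto simp: walk_append walk_winv walk_pos)
  then show "walk R w' m n"
    using \<open>w' = w1 @ w2\<close> by (metis walk_append walk_pequiv_start pequiv_sym pequiv_trans)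
next
  fix w1 w2 u v u' v'
  assume rel: "is_rel R (u @ v') (v @ u')" and "w = w1 @ winv u @ pos v @ w2"
    and w': "w' = w1 @ pos v' @ winv u' @ w2" and "walk R w m n"
  then obtain k1 k2 k3 where k: "walk R w1 m k1" "pequiv R (k2 @ u) k1" "pequiv R (k2 @ v) k3"
    "walk R w2 k3 n"
    by (auto simp: walk_append walk_winv walk_pos)
  have "pequiv R (k3 @ u') (k2 @ v @ u')"
    using pequiv_append_right[OF pequiv_sym[OF k(3)]] by simp
  also have "pequiv R \<dots> (k2 @ u @ v')"
    using pequiv_append_left[OF pequiv_rel[OF is_rel_sym[OF rel]]] .
  also have "pequiv R \<dots> (k1 @ v')"
    using pequiv_append_right[OF k(2)] by simp
  finally have "walk R (pos v' @ winv u' @ w2) k1 n"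
    unfolding walk_append walk_winv walk_pos using k(4) by (blast intro: pequiv_refl)
  then show "walk R w' m n"
    using k(1) w' walk_append by metis
qed

lemma rrev_walk: "rrev S R w w' \<Longrightarrow> walk R w m n \<Longrightarrow> walk R w' m n"
  unfolding rrev_def by (induction rule: rtranclp_induct) (auto intro: rrev_step_walk)

lemma rrev_Nil_imp_pequiv:
  assumes "rrev S R (winv u @ pos v) []"
  shows "pequiv R u v"
proof -
  have "walk R (winv u @ pos v) u v"
    by (auto simp: walk_append walk_winv walk_pos intro!: exI[of _ "[]"])
  from rrev_walk[OF assms this] show ?thesis by simp
qed

section \<open>Cancellativity\<close>

lemma rrev_step_has_neg_pos:
  assumes "rrev_step S R w w'"
  shows "\<exists>w1 w2 s t. w = w1 @ (s, False) # (t, True) # w2"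
proof -
  obtain w1 w2 u v where "u \<noteq> []" "v \<noteq> []" and w: "w = w1 @ winv u @ pos v @ w2"
    using assms unfolding rrev_step_def by blast
  then obtain s u0 t v0 where "u = s # u0" "v = t # v0"
    by (meson list.exhaust)
  with w have "w = (w1 @ winv u0) @ (s, False) # (t, True) # (pos v0 @ w2)"
    by (simp add: winv_Cons)
  then show ?thesis by blast
qed

lemma pos_winv_no_neg_pos: "pos u @ winv v \<noteq> w1 @ (s, False) # (t, True) # w2"
proof (induction u arbitrary: w1)
  case Nil
  have "(t, True) \<notin> set (winv v)" by (auto simp: winv_def)
  then show ?case by auto
next
  case (Cons a u)
  then show ?case by (cases w1) auto
qed

lemma no_rrev_step_pos_winv: "\<not> rrev_step S R (pos u @ winv v) w'"
  using rrev_step_has_neg_pos pos_winv_no_neg_pos by metis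

lemma pos_winv_eq_iff: "pos u @ winv v = pos u' @ winv v' \<longleftrightarrow> u = u' \<and> v = v'"
proof
  assume eq: "pos u @ winv v = pos u' @ winv v'"
  have "takeWhile snd (pos x @ winv y) = pos x" for x y :: "'a list"
    by (induction x) (cases y rule: rev_cases, simp_all add: winv_snoc)
  then have "pos u = pos u'" using eq by metis
  with eq show "u = u' \<and> v = v'" by (auto dest: pos_inj winv_inj)
qed simp

lemma two_letters_split:
  "[a, b] = w1 @ x @ y @ w2 \<Longrightarrow> x \<noteq> [] \<Longrightarrow> y \<noteq> [] \<Longrightarrow> w1 = [] \<and> x = [a] \<and> y = [b] \<and> w2 = []"
  by (auto simp: Cons_eq_append_conv)

lemma rrev_step_neg_pos_pair:
  assumes "condC S R" "s \<in> S" "rrev_step S R [(s, False), (s, True)] w'"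
  shows "\<exists>u. w' = pos u @ winv u"
  using assms(3) unfolding rrev_step_def
proof (elim disjE exE conjE)
  fix w1 w2 u assume "u \<noteq> []" and split: "[(s, False), (s, True)] = w1 @ winv u @ pos u @ w2"
    and "w' = w1 @ w2"
  moreover have "winv u \<noteq> []" "pos u \<noteq> []"
    using \<open>u \<noteq> []\<close> by (simp_all add: winv_def pos_def)
  ultimately have "w' = pos [] @ winv []"
    using two_letters_split[OF split] by simp
  then show ?thesis ..
next
  fix w1 w2 u v u' v'
  assume "u' \<in> lists S" "v' \<in> lists S" "u \<noteq> []" "v \<noteq> []" and rel: "is_rel R (u @ v') (v @ u')"
    and split: "[(s, False), (s, True)] = w1 @ winv u @ pos v @ w2"
    and w': "w' = w1 @ pos v' @ winv u' @ w2"
  moreover have "winv u \<noteq> []" "pos v \<noteq> []"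
    using \<open>u \<noteq> []\<close> \<open>v \<noteq> []\<close> by (simp_all add: winv_def pos_def)
  ultimately have "w1 = []" "w2 = []" "winv u = winv [s]" "pos v = pos [s]"
    using two_letters_split[OF split] by (simp_all add: winv_def)
  then have "u = [s]" "v = [s]" "w' = pos v' @ winv u'"
    using w' by (auto dest: winv_inj pos_inj simp del: pos_Cons)
  moreover have "is_rel R (s # v') (s # u')"
    using rel \<open>u = [s]\<close> \<open>v = [s]\<close> by simp
  then have "v' = u'"
    using assms(1,2) \<open>u' \<in> lists S\<close> \<open>v' \<in> lists S\<close> unfolding condC_def by blast
  ultimately show ?thesis by blast
qed

lemma rrev_neg_pos_pair:
  assumes "condC S R" "s \<in> S" "rrev S R [(s, False), (s, True)] w"
  shows "w = [(s, False), (s, True)] \<or> (\<exists>u. w = pos u @ winv u)"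
  using assms(3) unfolding rrev_def
  by (induction rule: rtranclp_induct)
    (use rrev_step_neg_pos_pair[OF assms(1,2)] no_rrev_step_pos_winv in metis)+

lemma pequiv_Cons_cancel:
  assumes "r_complete S R" "condC S R" "s \<in> S" "u \<in> lists S" "v \<in> lists S"
    and "pequiv R (s # u) (s # v)"
  shows "pequiv R u v"
proof -
  have "[s] \<in> lists S" "pequiv R ([s] @ u) ([s] @ v)"
    using assms(3,6) by simp_all
  then obtain u'' v'' w where rev: "rrev S R (winv [s] @ pos [s]) (pos v'' @ winv u'')"
    and "pequiv R v (u'' @ w)" "pequiv R u (v'' @ w)"
    using assms(1,4,5) unfolding r_complete_def by blast
  have "winv [s] @ pos [s] = [(s, False), (s, True)]"
    by (simp add: winv_def)
  with rev have "pos v'' @ winv u'' = [(s, False), (s, True)] \<or>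
      (\<exists>a. pos v'' @ winv u'' = pos a @ winv a)"
    using rrev_neg_pos_pair[OF assms(2,3)] by simp
  moreover have "pos v'' @ winv u'' \<noteq> [(s, False), (s, True)]"
    using pos_winv_no_neg_pos[of v'' u'' "[]" s s "[]"] by simp
  ultimately have "v'' = u''"
    by (auto simp: pos_winv_eq_iff)
  with \<open>pequiv R v (u'' @ w)\<close> \<open>pequiv R u (v'' @ w)\<close> show ?thesis
    by (metis pequiv_sym pequiv_trans)
qed

lemma pequiv_append_cancel_left:
  assumes "r_complete S R" "condC S R" "a \<in> lists S" "b \<in> lists S" "c \<in> lists S"
    and "pequiv R (a @ b) (a @ c)"
  shows "pequiv R b c"
  using assms(3,6)
proof (induction a)
  case (Cons s a)
  then show ?case
    using pequiv_Cons_cancel[OF assms(1,2), of s "a @ b" "a @ c"] assms(4,5) by auto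
qed simp

lemma r_complete_rev_rels:
  assumes "l_complete S R"
  shows "r_complete S (rev_rels R)"
  unfolding r_complete_def
proof (intro ballI impI)
  fix u v u' v'
  assume lists: "u \<in> lists S" "v \<in> lists S" "u' \<in> lists S" "v' \<in> lists S"
    and "pequiv (rev_rels R) (u @ v') (v @ u')"
  then have "pequiv R (rev u' @ rev v) (rev v' @ rev u)"
    using pequiv_rev_rels_iff[of R "rev v' @ rev u" "rev u' @ rev v"] by (simp add: pequiv_sym)
  then obtain U V w where UVw: "U \<in> lists S" "V \<in> lists S" "w \<in> lists S"
    and "lrev S R (pos (rev v) @ winv (rev u)) (winv V @ pos U)"
    and "pequiv R (rev v') (w @ U)" "pequiv R (rev u') (w @ V)"
    using assms lists unfolding l_complete_def by (metis rev_in_lists_iff)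
  then have "rrev S (rev_rels R) (winv u @ pos v) (pos (rev U) @ winv (rev V))"
    "pequiv (rev_rels R) u' (rev V @ rev w)" "pequiv (rev_rels R) v' (rev U @ rev w)"
    using lrev_imp_rrev pequiv_rev by (force simp: rev_pos rev_winv)+
  with UVw show "\<exists>u''\<in>lists S. \<exists>v''\<in>lists S. \<exists>w\<in>lists S.
      rrev S (rev_rels R) (winv u @ pos v) (pos v'' @ winv u'') \<and>
      pequiv (rev_rels R) u' (u'' @ w) \<and> pequiv (rev_rels R) v' (v'' @ w)"
    by (meson rev_in_lists_iff)
qed

lemma pequiv_append_cancel_right:
  assumes "l_complete S R" "condC S R" "a \<in> lists S" "b \<in> lists S" "c \<in> lists S"
    and "pequiv R (b @ a) (c @ a)"
  shows "pequiv R b c"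
proof -
  have "pequiv (rev_rels R) (rev a @ rev b) (rev a @ rev c)"
    using pequiv_rev[OF assms(6)] by simp
  then have "pequiv (rev_rels R) (rev b) (rev c)"
    using pequiv_append_cancel_left[OF r_complete_rev_rels[OF assms(1)] condC_rev_rels[OF assms(2)],
        of "rev a" "rev b" "rev c"] assms(3-5) by simp
  then show ?thesis
    using pequiv_rev_rels_iff by blast
qed

section \<open>Common right multiples\<close>

lemma common_right_multiple_row:
  assumes T: "\<And>u v. u \<in> T \<Longrightarrow> v \<in> T \<Longrightarrow> \<exists>u'\<in>T. \<exists>v'\<in>T. pequiv R (u @ v') (v @ u')"
    and "u \<in> T" "bs \<in> lists T"
  shows "\<exists>u'\<in>T. \<exists>cs\<in>lists T. pequiv R (u @ concat cs) (concat bs @ u')"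
  using assms(3,2)
proof (induction bs arbitrary: u)
  case Nil
  then show ?case by - (rule bexI[of _ u], rule bexI[of _ "[]"], simp_all)
next
  case (Cons b bs)
  then obtain u1 v1 where "u1 \<in> T" "v1 \<in> T" and uv1: "pequiv R (u @ v1) (b @ u1)"
    using T by blast
  then obtain u2 cs where "u2 \<in> T" "cs \<in> lists T"
    and IH: "pequiv R (u1 @ concat cs) (concat bs @ u2)"
    using Cons.IH by blast
  have "pequiv R (u @ v1 @ concat cs) (b @ u1 @ concat cs)"
    using pequiv_append_right[OF uv1] by simp
  also have "pequiv R \<dots> (b @ concat bs @ u2)"
    using pequiv_append_left[OF IH] .
  finally have "pequiv R (u @ concat (v1 # cs)) (concat (b # bs) @ u2)" by simp
  with \<open>u2 \<in> T\<close> \<open>v1 \<in> T\<close> \<open>cs \<in> lists T\<close> show ?case by (meson lists.Cons)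
qed

lemma common_right_multiple_concat:
  assumes T: "\<And>u v. u \<in> T \<Longrightarrow> v \<in> T \<Longrightarrow> \<exists>u'\<in>T. \<exists>v'\<in>T. pequiv R (u @ v') (v @ u')"
    and "as \<in> lists T" "bs \<in> lists T"
  shows "\<exists>cs\<in>lists T. \<exists>ds\<in>lists T. pequiv R (concat as @ concat cs) (concat bs @ concat ds)"
  using assms(2,3)
proof (induction as arbitrary: bs)
  case Nil
  then show ?case by - (rule bexI[of _ bs], rule bexI[of _ "[]"], simp_all)
next
  case (Cons a as)
  then have "a \<in> T" "as \<in> lists T" by simp_all
  obtain u2 cs1 where "u2 \<in> T" "cs1 \<in> lists T"
    and row: "pequiv R (a @ concat cs1) (concat bs @ u2)"
    using common_right_multiple_row[OF T \<open>a \<in> T\<close> \<open>bs \<in> lists T\<close>] by blast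
  obtain cs2 ds2 where "cs2 \<in> lists T" "ds2 \<in> lists T"
    and rest: "pequiv R (concat as @ concat cs2) (concat cs1 @ concat ds2)"
    using Cons.IH[OF \<open>cs1 \<in> lists T\<close>] by blast
  have "pequiv R (a @ concat as @ concat cs2) (a @ concat cs1 @ concat ds2)"
    using pequiv_append_left[OF rest] .
  also have "pequiv R \<dots> (concat bs @ u2 @ concat ds2)"
    using pequiv_append_right[OF row] by simp
  finally have "pequiv R (concat (a # as) @ concat cs2) (concat bs @ concat (u2 # ds2))" by simp
  with \<open>u2 \<in> T\<close> \<open>cs2 \<in> lists T\<close> \<open>ds2 \<in> lists T\<close> show ?case by (meson lists.Cons)
qed

lemma condEr_common_right_multiple:
  assumes "condEr S R" "a \<in> lists S" "b \<in> lists S"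
  shows "\<exists>c\<in>lists S. \<exists>d\<in>lists S. pequiv R (a @ c) (b @ d)"
proof -
  obtain T where letters_in: "(\<lambda>s. [s]) ` S \<subseteq> T" and "T \<subseteq> lists S"
    and Er: "\<forall>u\<in>T. \<forall>v\<in>T. \<exists>u'\<in>T. \<exists>v'\<in>T. rrev S R (winv (u @ v') @ pos (v @ u')) []"
    using assms(1) unfolding condEr_def by blast
  have T: "\<exists>u'\<in>T. \<exists>v'\<in>T. pequiv R (u @ v') (v @ u')" if "u \<in> T" "v \<in> T" for u v
    using Er that rrev_Nil_imp_pequiv by blast
  have letters: "map (\<lambda>s. [s]) x \<in> lists T" if "x \<in> lists S" for x
    using that letters_in by (induction x) auto
  have concat_in: "concat xs \<in> lists S" if "xs \<in> lists T" for xs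
    using that \<open>T \<subseteq> lists S\<close> by (induction xs) auto
  obtain cs ds where "cs \<in> lists T" "ds \<in> lists T"
    and "pequiv R (concat (map (\<lambda>s. [s]) a) @ concat cs) (concat (map (\<lambda>s. [s]) b) @ concat ds)"
    using common_right_multiple_concat[OF T letters[OF assms(2)] letters[OF assms(3)]] by blast
  then show ?thesis
    using concat_in by auto
qed

section \<open>Ore's theorem\<close>

definition image_group :: "('g, 'm) monoid_scheme \<Rightarrow> ('g \<Rightarrow> 'h) \<Rightarrow> 'h monoid" where
  "image_group H e = \<lparr>carrier = e ` carrier H,
     mult = (\<lambda>a b. e (inv_into (carrier H) e a \<otimes>\<^bsub>H\<^esub> inv_into (carrier H) e b)),
     one = e \<one>\<^bsub>H\<^esub>\<rparr>"

lemma image_group: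
  assumes "group H" and inj: "inj_on e (carrier H)"
  shows "group (image_group H e)" and "e \<in> iso H (image_group H e)"
proof -
  interpret H: group H by fact
  have [simp]: "inv_into (carrier H) e (e a) = a" if "a \<in> carrier H" for a
    using inj that by (simp add: inv_into_f_f)
  show "group (image_group H e)"
  proof (rule groupI)
    fix x assume "x \<in> carrier (image_group H e)"
    then obtain a where "a \<in> carrier H" "x = e a" by (auto simp: image_group_def)
    then have "e (inv\<^bsub>H\<^esub> a) \<otimes>\<^bsub>image_group H e\<^esub> x = \<one>\<^bsub>image_group H e\<^esub>"
      and "e (inv\<^bsub>H\<^esub> a) \<in> carrier (image_group H e)"
      by (simp_all add: image_group_def)
    then show "\<exists>y\<in>carrier (image_group H e). y \<otimes>\<^bsub>image_group H e\<^esub> x = \<one>\<^bsub>image_group H e\<^esub>"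
      by blast
  qed (auto simp: image_group_def H.m_assoc)
  show "e \<in> iso H (image_group H e)"
    using inj by (auto simp: iso_def hom_def bij_betw_def image_group_def)
qed

lemma (in group) inv_mult_eq_mult_inv:
  assumes "a \<in> carrier G" "b \<in> carrier G" "c \<in> carrier G" "d \<in> carrier G"
    and "a \<otimes> c = b \<otimes> d"
  shows "inv a \<otimes> b = c \<otimes> inv d"
proof -
  have "b = a \<otimes> (c \<otimes> inv d)"
    using assms by (simp add: m_assoc[symmetric]) (simp add: m_assoc)
  then show ?thesis
    using assms(1,3,4) by (simp add: m_assoc[symmetric])
qed

lemma (in group) mult_inv_cancel_right:
  assumes "a \<in> carrier G" "b \<in> carrier G" "c \<in> carrier G"
  shows "(a \<otimes> c) \<otimes> inv (b \<otimes> c) = a \<otimes> inv b"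
  using assms by (simp add: inv_mult_group m_assoc[symmetric]) (simp add: m_assoc)

lemma Image_image_equiv_class:
  assumes "equiv A r" "p \<in> A" and f: "\<And>q. (p, q) \<in> r \<Longrightarrow> (f p, f q) \<in> r"
  shows "r `` (f ` (r `` {p})) = r `` {f p}"
proof -
  have "(p, p) \<in> r" using assms(1,2) by (blast dest: equiv_class_self)
  moreover have "trans r" using assms(1) by (simp add: equiv_def)
  ultimately show ?thesis using f by (auto dest: transD)
qed

locale ore_congruence =
  fixes L :: "'a list set" and E :: "'a list \<Rightarrow> 'a list \<Rightarrow> bool"
  assumes Nil_in [simp]: "[] \<in> L"
    and append_in [simp]: "x \<in> L \<Longrightarrow> y \<in> L \<Longrightarrow> x @ y \<in> L"
    and E_refl [simp]: "E x x"
    and E_sym: "E x y \<Longrightarrow> E y x"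
    and E_trans: "E x y \<Longrightarrow> E y z \<Longrightarrow> E x z"
    and E_append_left: "E x y \<Longrightarrow> E (c @ x) (c @ y)"
    and E_append_right: "E x y \<Longrightarrow> E (x @ d) (y @ d)"
    and cancel_left: "a \<in> L \<Longrightarrow> b \<in> L \<Longrightarrow> c \<in> L \<Longrightarrow> E (a @ b) (a @ c) \<Longrightarrow> E b c"
    and cancel_right: "a \<in> L \<Longrightarrow> b \<in> L \<Longrightarrow> c \<in> L \<Longrightarrow> E (b @ a) (c @ a) \<Longrightarrow> E b c"
    and common_right_multiple: "a \<in> L \<Longrightarrow> b \<in> L \<Longrightarrow> \<exists>c\<in>L. \<exists>d\<in>L. E (a @ c) (b @ d)"
begin

definition frac_rel :: "(('a list \<times> 'a list) \<times> ('a list \<times> 'a list)) set" where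
  "frac_rel = {((x, y), (x', y')). x \<in> L \<and> y \<in> L \<and> x' \<in> L \<and> y' \<in> L \<and>
      (\<exists>z\<in>L. \<exists>z'\<in>L. E (x @ z) (x' @ z') \<and> E (y @ z) (y' @ z'))}"

definition fracs :: "('a list \<times> 'a list) set set" where
  "fracs = (L \<times> L) // frac_rel"

text \<open>The class of (x, y) represents the right fraction x y^-1.\<close>

definition fraction :: "'a list \<Rightarrow> 'a list \<Rightarrow> ('a list \<times> 'a list) set" where
  "fraction x y = frac_rel `` {(x, y)}"

lemma frac_rel_iff:
  "((x, y), (x', y')) \<in> frac_rel \<longleftrightarrow> x \<in> L \<and> y \<in> L \<and> x' \<in> L \<and> y' \<in> L \<and>
      (\<exists>z\<in>L. \<exists>z'\<in>L. E (x @ z) (x' @ z') \<and> E (y @ z) (y' @ z'))"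
  by (simp add: frac_rel_def)

lemma frac_rel_of_E:
  "x \<in> L \<Longrightarrow> y \<in> L \<Longrightarrow> x' \<in> L \<Longrightarrow> y' \<in> L \<Longrightarrow> E x x' \<Longrightarrow> E y y' \<Longrightarrow>
    ((x, y), (x', y')) \<in> frac_rel"
  unfolding frac_rel_iff by (metis Nil_in append_Nil2)

lemma frac_rel_trans:
  assumes "((x, y), (x', y')) \<in> frac_rel" "((x', y'), (x'', y'')) \<in> frac_rel"
  shows "((x, y), (x'', y'')) \<in> frac_rel"
proof -
  obtain z z' where "z \<in> L" "z' \<in> L" and z: "E (x @ z) (x' @ z')" "E (y @ z) (y' @ z')"
    and "x \<in> L" "y \<in> L" using assms(1) by (auto simp: frac_rel_iff)
  obtain t t' where "t \<in> L" "t' \<in> L" and t: "E (x' @ t) (x'' @ t')" "E (y' @ t) (y'' @ t')"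
    and "x'' \<in> L" "y'' \<in> L" using assms(2) by (auto simp: frac_rel_iff)
  obtain c d where "c \<in> L" "d \<in> L" and cd: "E (z' @ c) (t @ d)"
    using common_right_multiple[OF \<open>z' \<in> L\<close> \<open>t \<in> L\<close>] by blast
  have "E (a @ z @ c) (a'' @ t' @ d)"
    if "E (a @ z) (a' @ z')" "E (a' @ t) (a'' @ t')" for a a' a''
  proof -
    have "E (a @ z @ c) (a' @ z' @ c)" using E_append_right[OF that(1), of c] by simp
    moreover have "E (a' @ z' @ c) (a' @ t @ d)" using E_append_left[OF cd] by simp
    moreover have "E (a' @ t @ d) (a'' @ t' @ d)" using E_append_right[OF that(2), of d] by simp
    ultimately show ?thesis by (meson E_trans)
  qed
  with z t \<open>x \<in> L\<close> \<open>y \<in> L\<close> \<open>x'' \<in> L\<close> \<open>y'' \<in> L\<close> \<open>z \<in> L\<close> \<open>c \<in> L\<close> \<open>t' \<in> L\<close> \<open>d \<in> L\<close>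
  show ?thesis unfolding frac_rel_iff by (meson append_in)
qed

lemma equiv_frac_rel: "equiv (L \<times> L) frac_rel"
proof (rule equivI)
  show "refl_on (L \<times> L) frac_rel"
    by (rule refl_onI) (auto simp: frac_rel_def intro!: bexI[of _ "[]"])
  show "sym frac_rel"
    by (rule symI) (auto simp: frac_rel_def intro: E_sym)
  show "trans frac_rel"
    by (rule transI) (metis frac_rel_trans surj_pair)
  show "frac_rel \<subseteq> (L \<times> L) \<times> (L \<times> L)"
    by (auto simp: frac_rel_def)
qed

lemma fraction_eq_iff:
  "x \<in> L \<Longrightarrow> y \<in> L \<Longrightarrow> x' \<in> L \<Longrightarrow> y' \<in> L \<Longrightarrow>
    fraction x y = fraction x' y' \<longleftrightarrow> ((x, y), (x', y')) \<in> frac_rel"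
  unfolding fraction_def using equiv_class_eq_iff[OF equiv_frac_rel] by blast

lemma fraction_in_fracs: "x \<in> L \<Longrightarrow> y \<in> L \<Longrightarrow> fraction x y \<in> fracs"
  unfolding fraction_def fracs_def by (simp add: quotientI)

lemma fracs_cases:
  assumes "A \<in> fracs"
  obtains x y where "x \<in> L" "y \<in> L" "A = fraction x y"
  using assms unfolding fracs_def fraction_def by (auto elim: quotientE)

definition act :: "'a list \<Rightarrow> ('a list \<times> 'a list) set \<Rightarrow> ('a list \<times> 'a list) set" where
  "act m = (\<lambda>A\<in>fracs. frac_rel `` ((\<lambda>(x, y). (m @ x, y)) ` A))"

lemma act_fraction:
  assumes "m \<in> L" "x \<in> L" "y \<in> L"
  shows "act m (fraction x y) = fraction (m @ x) y"
proof -
  have "((m @ x, y), (m @ x', y')) \<in> frac_rel" if "((x, y), (x', y')) \<in> frac_rel" for x' y'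
    using that assms(1) by (auto simp: frac_rel_iff dest: E_append_left[of _ _ m])
  then have "frac_rel `` ((\<lambda>(x, y). (m @ x, y)) ` fraction x y) = fraction (m @ x) y"
    unfolding fraction_def using assms
    by (subst Image_image_equiv_class[OF equiv_frac_rel]) auto
  then show ?thesis
    using assms by (simp add: act_def fraction_in_fracs)
qed

lemma act_Bij:
  assumes "m \<in> L"
  shows "act m \<in> Bij fracs"
proof -
  have "inj_on (act m) fracs"
  proof (rule inj_onI)
    fix A B assume "A \<in> fracs" "B \<in> fracs" and eq: "act m A = act m B"
    obtain x y x' y' where L: "x \<in> L" "y \<in> L" "x' \<in> L" "y' \<in> L"
      and "A = fraction x y" "B = fraction x' y'"
      using \<open>A \<in> fracs\<close> \<open>B \<in> fracs\<close> by (metis fracs_cases)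
    moreover have "((m @ x, y), (m @ x', y')) \<in> frac_rel"
      using eq assms L \<open>A = _\<close> \<open>B = _\<close> by (simp add: act_fraction fraction_eq_iff)
    then have "((x, y), (x', y')) \<in> frac_rel"
      using assms L unfolding frac_rel_iff by (metis append_assoc append_in cancel_left)
    ultimately show "A = B" by (simp add: fraction_eq_iff)
  qed
  moreover have "act m ` fracs = fracs"
  proof
    show "act m ` fracs \<subseteq> fracs"
      using assms by (auto simp: act_fraction fraction_in_fracs elim!: fracs_cases)
    show "fracs \<subseteq> act m ` fracs"
    proof
      fix A assume "A \<in> fracs"
      then obtain x y where "x \<in> L" "y \<in> L" "A = fraction x y" by (rule fracs_cases)
      moreover obtain c d where "c \<in> L" "d \<in> L" and cd: "E (m @ c) (x @ d)"
        using common_right_multiple[OF assms \<open>x \<in> L\<close>] by blast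
      moreover have "E ((m @ c) @ []) (x @ d) \<and> E ((y @ d) @ []) (y @ d)"
        using cd by simp
      ultimately have "((m @ c, y @ d), (x, y)) \<in> frac_rel"
        using assms unfolding frac_rel_iff by (meson Nil_in append_in)
      then have "act m (fraction c (y @ d)) = A" "fraction c (y @ d) \<in> fracs"
        using assms \<open>A = fraction x y\<close> \<open>x \<in> L\<close> \<open>y \<in> L\<close> \<open>c \<in> L\<close> \<open>d \<in> L\<close>
        by (simp_all add: act_fraction fraction_eq_iff fraction_in_fracs)
      then show "A \<in> act m ` fracs" by blast
    qed
  qed
  ultimately show ?thesis
    by (simp add: Bij_def bij_betw_def act_def)
qed

abbreviation perms :: "(('a list \<times> 'a list) set \<Rightarrow> ('a list \<times> 'a list) set) monoid" where
  "perms \<equiv> BijGroup fracs"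

lemma carrier_perms: "carrier perms = Bij fracs"
  by (simp add: BijGroup_def)

lemma act_in_perms: "m \<in> L \<Longrightarrow> act m \<in> carrier perms"
  by (simp add: carrier_perms act_Bij)

lemma perms_mult_apply:
  "f \<in> Bij fracs \<Longrightarrow> g \<in> Bij fracs \<Longrightarrow> A \<in> fracs \<Longrightarrow> (f \<otimes>\<^bsub>perms\<^esub> g) A = f (g A)"
  by (simp add: BijGroup_def compose_def)

lemma act_append: "a \<in> L \<Longrightarrow> b \<in> L \<Longrightarrow> act (a @ b) = act a \<otimes>\<^bsub>perms\<^esub> act b"
proof (rule extensionalityI[of _ fracs])
  assume "a \<in> L" "b \<in> L"
  show "act (a @ b) \<in> extensional fracs" by (simp add: act_def)
  show "act a \<otimes>\<^bsub>perms\<^esub> act b \<in> extensional fracs"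
    using \<open>a \<in> L\<close> \<open>b \<in> L\<close> by (simp add: BijGroup_def act_Bij compose_def)
  fix A assume "A \<in> fracs"
  then show "act (a @ b) A = (act a \<otimes>\<^bsub>perms\<^esub> act b) A"
    using \<open>a \<in> L\<close> \<open>b \<in> L\<close> by (auto simp: perms_mult_apply act_Bij act_fraction elim!: fracs_cases)
qed

lemma act_Nil: "act [] = \<one>\<^bsub>perms\<^esub>"
proof (rule extensionalityI[of _ fracs])
  show "act [] \<in> extensional fracs" "\<one>\<^bsub>perms\<^esub> \<in> extensional fracs"
    by (simp_all add: act_def BijGroup_def)
  fix A assume "A \<in> fracs"
  then show "act [] A = \<one>\<^bsub>perms\<^esub> A"
    by (auto simp: act_fraction BijGroup_def elim!: fracs_cases)
qed

lemma act_eq_iff: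
  assumes "u \<in> L" "v \<in> L"
  shows "act u = act v \<longleftrightarrow> E u v"
proof
  assume "act u = act v"
  then have "fraction u [] = fraction v []"
    using assms act_fraction[of _ "[]" "[]"] by (metis Nil_in append_Nil2)
  then obtain z z' where "z \<in> L" "z' \<in> L" "E (u @ z) (v @ z')" "E z z'"
    using assms by (auto simp: fraction_eq_iff frac_rel_iff)
  then have "E (u @ z) (v @ z)"
    by (meson E_append_left E_sym E_trans)
  then show "E u v"
    using cancel_right assms \<open>z \<in> L\<close> by blast
next
  assume "E u v"
  show "act u = act v"
  proof (rule extensionalityI[of _ fracs])
    show "act u \<in> extensional fracs" "act v \<in> extensional fracs"
      by (simp_all add: act_def)
    fix A assume "A \<in> fracs"
    then obtain x y where "x \<in> L" "y \<in> L" "A = fraction x y" by (rule fracs_cases)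
    moreover have "((u @ x, y), (v @ x, y)) \<in> frac_rel"
      using frac_rel_of_E E_append_right[OF \<open>E u v\<close>] assms \<open>x \<in> L\<close> \<open>y \<in> L\<close> by simp
    ultimately show "act u A = act v A"
      using assms by (simp add: act_fraction fraction_eq_iff)
  qed
qed

lemma fraction_diagonal: "y \<in> L \<Longrightarrow> fraction y y = fraction [] []"
proof -
  assume "y \<in> L"
  moreover have "E (y @ []) ([] @ y)" by simp
  ultimately have "((y, y), ([], [])) \<in> frac_rel"
    unfolding frac_rel_iff by (meson Nil_in)
  with \<open>y \<in> L\<close> show ?thesis by (simp add: fraction_eq_iff)
qed

lemma quotient_apply_fraction_one:
  assumes "x \<in> L" "y \<in> L"
  shows "(act x \<otimes>\<^bsub>perms\<^esub> inv\<^bsub>perms\<^esub> act y) (fraction [] []) = fraction x y"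
proof -
  have "inj_on (act y) fracs"
    using act_Bij[OF assms(2)] by (simp add: Bij_def bij_betw_def)
  moreover have "act y (fraction [] y) = fraction [] []"
    using act_fraction[OF assms(2) Nil_in assms(2)] fraction_diagonal[OF assms(2)] by simp
  ultimately have "inv_into fracs (act y) (fraction [] []) = fraction [] y"
    using fraction_in_fracs[OF Nil_in assms(2)] by (simp add: inv_into_f_eq)
  then have "(inv\<^bsub>perms\<^esub> act y) (fraction [] []) = fraction [] y"
    by (simp only: inv_BijGroup[OF act_Bij[OF assms(2)]]
        restrict_apply'[OF fraction_in_fracs[OF Nil_in Nil_in]])
  moreover have "inv\<^bsub>perms\<^esub> act y \<in> Bij fracs"
    using group.inv_closed[OF group_BijGroup act_in_perms[OF assms(2)]] by (simp only: carrier_perms)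
  ultimately show ?thesis
    using assms perms_mult_apply[OF act_Bij[OF assms(1)] _ fraction_in_fracs[OF Nil_in Nil_in]]
    by (simp add: act_fraction)
qed

lemma quotient_act_eq:
  assumes "((x, y), (x', y')) \<in> frac_rel"
  shows "act x \<otimes>\<^bsub>perms\<^esub> inv\<^bsub>perms\<^esub> act y = act x' \<otimes>\<^bsub>perms\<^esub> inv\<^bsub>perms\<^esub> act y'"
proof -
  interpret perms: group perms by (rule group_BijGroup)
  obtain z z' where L: "x \<in> L" "y \<in> L" "x' \<in> L" "y' \<in> L" "z \<in> L" "z' \<in> L"
    and "E (x @ z) (x' @ z')" "E (y @ z) (y' @ z')"
    using assms by (auto simp: frac_rel_iff)
  then have "act (x @ z) = act (x' @ z')" "act (y @ z) = act (y' @ z')"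
    by (simp_all add: act_eq_iff)
  then have "(act x \<otimes>\<^bsub>perms\<^esub> act z) \<otimes>\<^bsub>perms\<^esub> inv\<^bsub>perms\<^esub> (act y \<otimes>\<^bsub>perms\<^esub> act z) =
      (act x' \<otimes>\<^bsub>perms\<^esub> act z') \<otimes>\<^bsub>perms\<^esub> inv\<^bsub>perms\<^esub> (act y' \<otimes>\<^bsub>perms\<^esub> act z')"
    using L by (simp add: act_append)
  then show ?thesis
    using L by (simp add: perms.mult_inv_cancel_right act_in_perms)
qed

definition quotients :: "(('a list \<times> 'a list) set \<Rightarrow> ('a list \<times> 'a list) set) set" where
  "quotients = {act x \<otimes>\<^bsub>perms\<^esub> inv\<^bsub>perms\<^esub> act y | x y. x \<in> L \<and> y \<in> L}"

lemma quotientsE: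
  assumes "g \<in> quotients"
  obtains x y where "x \<in> L" "y \<in> L" "g = act x \<otimes>\<^bsub>perms\<^esub> inv\<^bsub>perms\<^esub> act y"
  using assms unfolding quotients_def by blast

lemma quotientsI: "x \<in> L \<Longrightarrow> y \<in> L \<Longrightarrow> act x \<otimes>\<^bsub>perms\<^esub> inv\<^bsub>perms\<^esub> act y \<in> quotients"
  unfolding quotients_def by blast

lemma act_in_quotients:
  assumes "u \<in> L"
  shows "act u \<in> quotients"
proof -
  interpret perms: group perms by (rule group_BijGroup)
  have "act u \<otimes>\<^bsub>perms\<^esub> inv\<^bsub>perms\<^esub> act [] = act u"
    using assms by (simp add: act_Nil act_in_perms)
  then show ?thesis
    using quotientsI[OF assms Nil_in] by simp
qed

lemma subgroup_quotients: "subgroup quotients perms"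
proof -
  interpret perms: group perms by (rule group_BijGroup)
  show ?thesis
  proof (rule perms.subgroupI)
    show "quotients \<subseteq> carrier perms"
      by (auto simp: act_in_perms elim!: quotientsE)
    show "quotients \<noteq> {}"
      using quotientsI[OF Nil_in Nil_in] by blast
  next
    fix g assume "g \<in> quotients"
    then obtain x y where "x \<in> L" "y \<in> L" "g = act x \<otimes>\<^bsub>perms\<^esub> inv\<^bsub>perms\<^esub> act y"
      by (rule quotientsE)
    then have "inv\<^bsub>perms\<^esub> g = act y \<otimes>\<^bsub>perms\<^esub> inv\<^bsub>perms\<^esub> act x"
      by (simp add: perms.inv_mult_group act_in_perms)
    then show "inv\<^bsub>perms\<^esub> g \<in> quotients"
      using quotientsI \<open>x \<in> L\<close> \<open>y \<in> L\<close> by simp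
  next
    fix g h assume "g \<in> quotients" "h \<in> quotients"
    then obtain x y x' y' where L: "x \<in> L" "y \<in> L" "x' \<in> L" "y' \<in> L"
      and gh: "g = act x \<otimes>\<^bsub>perms\<^esub> inv\<^bsub>perms\<^esub> act y" "h = act x' \<otimes>\<^bsub>perms\<^esub> inv\<^bsub>perms\<^esub> act y'"
      by (metis quotientsE)
    obtain c d where "c \<in> L" "d \<in> L" "E (y @ c) (x' @ d)"
      using common_right_multiple[OF L(2,3)] by blast
    then have "act y \<otimes>\<^bsub>perms\<^esub> act c = act x' \<otimes>\<^bsub>perms\<^esub> act d"
      using L by (simp add: act_append[symmetric] act_eq_iff)
    then have swap: "inv\<^bsub>perms\<^esub> act y \<otimes>\<^bsub>perms\<^esub> act x' = act c \<otimes>\<^bsub>perms\<^esub> inv\<^bsub>perms\<^esub> act d"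
      using L \<open>c \<in> L\<close> \<open>d \<in> L\<close> by (intro perms.inv_mult_eq_mult_inv) (simp_all add: act_in_perms)
    have "g \<otimes>\<^bsub>perms\<^esub> h =
        act x \<otimes>\<^bsub>perms\<^esub> (inv\<^bsub>perms\<^esub> act y \<otimes>\<^bsub>perms\<^esub> act x') \<otimes>\<^bsub>perms\<^esub> inv\<^bsub>perms\<^esub> act y'"
      using L gh by (simp add: perms.m_assoc act_in_perms)
    also have "\<dots> = (act x \<otimes>\<^bsub>perms\<^esub> act c) \<otimes>\<^bsub>perms\<^esub> inv\<^bsub>perms\<^esub> (act y' \<otimes>\<^bsub>perms\<^esub> act d)"
      using L \<open>c \<in> L\<close> \<open>d \<in> L\<close> by (simp add: swap perms.m_assoc perms.inv_mult_group act_in_perms)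
    also have "\<dots> = act (x @ c) \<otimes>\<^bsub>perms\<^esub> inv\<^bsub>perms\<^esub> act (y' @ d)"
      using L \<open>c \<in> L\<close> \<open>d \<in> L\<close> by (simp add: act_append)
    finally show "g \<otimes>\<^bsub>perms\<^esub> h \<in> quotients"
      using quotientsI L \<open>c \<in> L\<close> \<open>d \<in> L\<close> by simp
  qed
qed

lemma inj_on_apply_fraction_one: "inj_on (\<lambda>g. g (fraction [] [])) quotients"
proof (rule inj_onI)
  fix g h assume "g \<in> quotients" "h \<in> quotients" and eq: "g (fraction [] []) = h (fraction [] [])"
  obtain x y x' y' where L: "x \<in> L" "y \<in> L" "x' \<in> L" "y' \<in> L"
    and gh: "g = act x \<otimes>\<^bsub>perms\<^esub> inv\<^bsub>perms\<^esub> act y" "h = act x' \<otimes>\<^bsub>perms\<^esub> inv\<^bsub>perms\<^esub> act y'"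
    using \<open>g \<in> quotients\<close> \<open>h \<in> quotients\<close> by (metis quotientsE)
  then have "fraction x y = fraction x' y'"
    using eq by (simp add: quotient_apply_fraction_one)
  then show "g = h"
    using L gh by (simp add: fraction_eq_iff quotient_act_eq)
qed

theorem group_of_fractions:
  "\<exists>(G :: ('a list \<times> 'a list) set monoid) f. group G \<and>
     (\<forall>u \<in> L. f u \<in> carrier G) \<and>
     f [] = \<one>\<^bsub>G\<^esub> \<and>
     (\<forall>u \<in> L. \<forall>v \<in> L. f (u @ v) = f u \<otimes>\<^bsub>G\<^esub> f v) \<and>
     (\<forall>u \<in> L. \<forall>v \<in> L. f u = f v \<longleftrightarrow> E u v) \<and>
     (\<forall>g \<in> carrier G. \<exists>x \<in> L. \<exists>y \<in> L. g = f x \<otimes>\<^bsub>G\<^esub> inv\<^bsub>G\<^esub> (f y))"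
proof -
  interpret perms: group perms by (rule group_BijGroup)
  define Q where "Q = perms\<lparr>carrier := quotients\<rparr>"
  define e :: "(('a list \<times> 'a list) set \<Rightarrow> ('a list \<times> 'a list) set) \<Rightarrow> ('a list \<times> 'a list) set"
    where "e = (\<lambda>g. g (fraction [] []))"
  \<comment> \<open>The action on fractions is free and transitive, so evaluation at the fraction 1 is a
    bijection onto the fractions, which live in the carrier type that is asked for.\<close>
  define G where "G = image_group Q e"
  have "group Q"
    unfolding Q_def by (rule perms.subgroup_imp_group[OF subgroup_quotients])
  have inj: "inj_on e (carrier Q)"
    using inj_on_apply_fraction_one by (simp add: Q_def e_def)
  have "group G" "e \<in> hom Q G"
    using image_group[OF \<open>group Q\<close> inj] by (simp_all add: G_def iso_def)
  then interpret e: group_hom Q G e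
    using \<open>group Q\<close> by (simp add: group_hom_def group_hom_axioms_def)
  have act_Q: "act u \<in> carrier Q" if "u \<in> L" for u
    using that by (simp add: Q_def act_in_quotients)
  have inv_Q: "inv\<^bsub>Q\<^esub> act u = inv\<^bsub>perms\<^esub> act u" if "u \<in> L" for u
    using that by (simp add: Q_def act_in_quotients subgroup_quotients)
  define f where "f u = e (act u)" for u
  have "\<forall>u \<in> L. f u \<in> carrier G"
    by (simp add: f_def act_Q)
  moreover have "f [] = \<one>\<^bsub>G\<^esub>"
    using e.hom_one by (simp add: f_def act_Nil Q_def)
  moreover have "\<forall>u \<in> L. \<forall>v \<in> L. f (u @ v) = f u \<otimes>\<^bsub>G\<^esub> f v"
    using e.hom_mult act_Q by (simp add: f_def act_append Q_def)
  moreover have "\<forall>u \<in> L. \<forall>v \<in> L. f u = f v \<longleftrightarrow> E u v"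
    using inj act_Q by (auto simp: f_def act_eq_iff[symmetric] dest: inj_onD)
  moreover have "\<forall>g \<in> carrier G. \<exists>x \<in> L. \<exists>y \<in> L. g = f x \<otimes>\<^bsub>G\<^esub> inv\<^bsub>G\<^esub> (f y)"
  proof
    fix g assume "g \<in> carrier G"
    then obtain x y where "x \<in> L" "y \<in> L" "g = e (act x \<otimes>\<^bsub>perms\<^esub> inv\<^bsub>perms\<^esub> act y)"
      by (auto simp: G_def image_group_def Q_def elim!: quotientsE)
    moreover have "act x \<otimes>\<^bsub>perms\<^esub> inv\<^bsub>perms\<^esub> act y = act x \<otimes>\<^bsub>Q\<^esub> inv\<^bsub>Q\<^esub> act y"
      using inv_Q[OF \<open>y \<in> L\<close>] by (simp add: Q_def)
    ultimately show "\<exists>x \<in> L. \<exists>y \<in> L. g = f x \<otimes>\<^bsub>G\<^esub> inv\<^bsub>G\<^esub> (f y)"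
      using act_Q by (auto simp: f_def)
  qed
  ultimately show ?thesis
    using \<open>group G\<close> by blast
qed

end

lemma ore_congruence_pequiv:
  assumes "complete S R" "condC S R" "condEr S R"
  shows "ore_congruence (lists S) (pequiv R)"
proof
  show "\<And>x y. pequiv R x y \<Longrightarrow> pequiv R y x" by (rule pequiv_sym)
  show "\<And>x y z. pequiv R x y \<Longrightarrow> pequiv R y z \<Longrightarrow> pequiv R x z" by (rule pequiv_trans)
  show "\<And>x y c. pequiv R x y \<Longrightarrow> pequiv R (c @ x) (c @ y)" by (rule pequiv_append_left)
  show "\<And>x y d. pequiv R x y \<Longrightarrow> pequiv R (x @ d) (y @ d)" by (rule pequiv_append_right)
  have "r_complete S R" "l_complete S R"
    using assms(1) by (simp_all add: complete_def)
  then show "\<And>a b c. a \<in> lists S \<Longrightarrow> b \<in> lists S \<Longrightarrow> c \<in> lists S \<Longrightarrow>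
      pequiv R (a @ b) (a @ c) \<Longrightarrow> pequiv R b c"
    and "\<And>a b c. a \<in> lists S \<Longrightarrow> b \<in> lists S \<Longrightarrow> c \<in> lists S \<Longrightarrow>
      pequiv R (b @ a) (c @ a) \<Longrightarrow> pequiv R b c"
    using pequiv_append_cancel_left pequiv_append_cancel_right assms(2) by blast+
  show "\<And>a b. a \<in> lists S \<Longrightarrow> b \<in> lists S \<Longrightarrow>
      \<exists>c\<in>lists S. \<exists>d\<in>lists S. pequiv R (a @ c) (b @ d)"
    by (rule condEr_common_right_multiple[OF assms(3)])
qed simp_all

theorem proposition7p1:
  fixes S :: "'a set" and R :: "('a list \<times> 'a list) set"
  assumes "positive_presentation S R"
    and "complete S R"
    and "condC S R"
    and "condEr S R"
  shows "embeds_in_group_of_fractions S R"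
proof -
  interpret ore_congruence "lists S" "pequiv R"
    using assms(2-4) by (rule ore_congruence_pequiv)
  show ?thesis
    unfolding embeds_in_group_of_fractions_def by (rule group_of_fractions)
qed

end
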